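(* Let $n$ be a positive integer, let $f\in C[0,1]$ and $p=P_{\mathcal{P}_n}(f)$. For any $\mu,\gamma\in C^*[0,1]$: (i) if $\mu([0,1])\neq\gamma([0,1])$, then $\gamma\notin\widehat{D}^*P_{\mathcal{P}_n}(f)(\mu)$ and $\mu\notin\widehat{D}^*P_{\mathcal{P}_n}(f)(\gamma)$; (ii) if $\mu([0,1])\neq 0$, then $\theta^*\notin\widehat{D}^*P_{\mathcal{P}_n}(f)(\mu)$ and $\mu\notin\widehat{D}^*P_{\mathcal{P}_n}(f)(\theta^* )$; (iii) if $\langle\gamma,f-p\rangle<0$, then $\gamma\notin\widehat{D}^*P_{\mathcal{P}_n}(f)(\mu)$ for every $\mu\in C^*[0,1]$.
   Context: $C[0,1]$ is the Banach space of continuous real-valued functions on $[0,1]$ with the maximum norm $\|f\|=\max_{0\le t\le 1}|f(t)|$. For a nonnegative integer $n$, $\mathcal{P}_n\subseteq C[0,1]$ denotes the closed subspace of real polynomials of degree at most $n$. The metric projection $P_{\mathcal{P}_n}:C[0,1]\to\mathcal{P}_n$ maps $f$ to the unique $p\in\mathcal{P}_n$ with $\|f-p\|=\min_{q\in\mathcal{P}_n}\|f-q\|$ (it is single-valued and continuous). The dual $C^*[0,1]$ is identified (Riesz representation) with the space of real regular countably additive Borel set functions (signed measures) $\mu$ on $[0,1]$, with pairing $\langle\mu,f\rangle=\int_0^1 f(t)\,\mu(dt)$; $\mu([0,1])$ is the value of $\mu$ on the whole interval, and $\theta^*$ is the zero measure. For $f\in C[0,1]$ and $\mu\in C^*[0,1]$,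 the Mordukhovich derivative (coderivative) of $P_{\mathcal{P}_n}$ at $f$ applied to $\mu$ is the set $$\widehat{D}^*P_{\mathcal{P}_n}(f)(\mu)=\Big\{\varphi\in C^*[0,1]:\ \limsup_{g\to f,\ g\neq f}\frac{\langle\varphi,g-f\rangle-\langle\mu,P_{\mathcal{P}_n}(g)-P_{\mathcal{P}_n}(f)\rangle}{\|g-f\|+\|P_{\mathcal{P}_n}(g)-P_{\mathcal{P}_n}(f)\|}\le 0\Big\}.$$ *)

theory Defs
  imports "HOL-Analysis.Analysis" "HOL-Probability.Probability" "HOL-Computational_Algebra.Polynomial"
begin

text \<open>Elements of C[0,1] are represented canonically as real functions that are
continuous on [0,1] and vanish outside [0,1].\<close>
definition C01 :: "(real \<Rightarrow> real) set" where
  "C01 = {f. continuous_on {0..1} f \<and> (\<forall>t. t \<notin> {0..1} \<longrightarrow> f t = 0)}"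

definition supnorm :: "(real \<Rightarrow> real) \<Rightarrow> real" where
  "supnorm f = (SUP t\<in>{0..1}. \<bar>f t\<bar>)"

definition polys :: "nat \<Rightarrow> (real \<Rightarrow> real) set" where
  "polys n = {g \<in> C01. \<exists>q :: real poly. degree q \<le> n \<and> (\<forall>t\<in>{0..1}. g t = poly q t)}"

definition proj :: "nat \<Rightarrow> (real \<Rightarrow> real) \<Rightarrow> (real \<Rightarrow> real)" where
  "proj n f = (THE p. p \<in> polys n \<and> (\<forall>q\<in>polys n. supnorm (f - p) \<le> supnorm (f - q)))"

text \<open>Dual space C*[0,1]: real signed Borel measures on [0,1], represented as a
difference M1 - M2 of two finite Borel measures on [0,1] (these are automatically regular).\<close>
type_synonym smeasure = "real measure \<times> real measure"

definition dual01 :: "smeasure set" where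
  "dual01 = {(M1, M2). sets M1 = sets (restrict_space borel {0..1}) \<and>
                        sets M2 = sets (restrict_space borel {0..1}) \<and>
                        finite_measure M1 \<and> finite_measure M2}"

definition pairing :: "smeasure \<Rightarrow> (real \<Rightarrow> real) \<Rightarrow> real" where
  "pairing m f = (integral\<^sup>L (fst m) f) - (integral\<^sup>L (snd m) f)"

definition total :: "smeasure \<Rightarrow> real" where
  "total m = measure (fst m) {0..1} - measure (snd m) {0..1}"

definition zero_sm :: smeasure where
  "zero_sm = (null_measure (restrict_space borel {0..1}), null_measure (restrict_space borel {0..1}))"

text \<open>Mordukhovich coderivative of proj n at f applied to mu; the condition
limsup ... <= 0 is written out as: for every eps > 0 the quotient is eventually <= eps.\<close>
definition coderiv :: "nat \<Rightarrow> (real \<Rightarrow> real) \<Rightarrow> smeasure \<Rightarrow> smeasure set" where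
  "coderiv n f \<mu> = {\<phi> \<in> dual01. \<forall>\<epsilon>>0. \<exists>\<delta>>0. \<forall>g\<in>C01. g \<noteq> f \<and> supnorm (g - f) < \<delta> \<longrightarrow>
      (pairing \<phi> (g - f) - pairing \<mu> (proj n g - proj n f)) /
      (supnorm (g - f) + supnorm (proj n g - proj n f)) \<le> \<epsilon>}"

end

theory Submission
  imports Defs
begin

text \<open>
  The metric projection commutes with adding a polynomial and with scaling, because these maps
  permute the polynomials of degree at most \<open>n\<close> and scale all distances alike.  Hence
  along the ray \<open>g = f + s\<close> (constant \<open>s\<close>) the projection moves by \<open>s\<close> as well, and the
  quotient in the coderivative equals \<open>s (\<phi>([0,1]) - \<mu>([0,1])) / 2\<bar>s\<bar>\<close>, which can be made a
  fixed positive number if the total masses differ.  Along the segment from \<open>f\<close> to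
  \<open>p = P(f)\<close> the projection stays at \<open>p\<close>, and the quotient is
  \<open>-\<langle>\<gamma>, f - p\<rangle> / \<parallel>f - p\<parallel>\<close>.  Both rays therefore violate the \<open>limsup \<le> 0\<close> condition.
  The real work is that the projection is well defined.  Best approximations exist because
  competitors are determined by their values at \<open>n + 1\<close> nodes, which range over a compact box.
  They are unique because a best approximation has at least \<open>n + 1\<close> extremal points (otherwise the
  Lagrange interpolant of the error on them is a direction of descent), while the midpoint of two
  best approximations is again one, and the two can only be extremal there if they coincide.
\<close>

section \<open>The maximum norm\<close>

lemma bdd_above_abs_image_01:
  fixes h :: "real \<Rightarrow> real"
  assumes "continuous_on {0..1} h"
  shows "bdd_above ((\<lambda>t. \<bar>h t\<bar>) ` {0..1})"
proof -
  have "continuous_on {0..1} (\<lambda>t. \<bar>h t\<bar>)" using assms by (intro continuous_intros)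
  then have "compact ((\<lambda>t. \<bar>h t\<bar>) ` {0..1::real})" by (intro compact_continuous_image) auto
  then show ?thesis by (intro bounded_imp_bdd_above compact_imp_bounded)
qed

lemma abs_le_supnorm:
  assumes "continuous_on {0..1} h" "t \<in> {0..1}"
  shows "\<bar>h t\<bar> \<le> supnorm h"
  unfolding supnorm_def using bdd_above_abs_image_01[OF assms(1)] assms(2) by (intro cSUP_upper)

lemma supnorm_le:
  assumes "\<And>t. t \<in> {0..1::real} \<Longrightarrow> \<bar>h t\<bar> \<le> M"
  shows "supnorm h \<le> M"
  unfolding supnorm_def using assms by (intro cSUP_least) auto

lemma supnorm_attained:
  assumes "continuous_on {0..1} h"
  obtains t where "t \<in> {0..1::real}" "\<bar>h t\<bar> = supnorm h"
proof -
  have "continuous_on {0..1} (\<lambda>t. \<bar>h t\<bar>)" using assms by (intro continuous_intros)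
  then obtain t where t: "t \<in> {0..1::real}" "\<forall>s\<in>{0..1}. \<bar>h s\<bar> \<le> \<bar>h t\<bar>"
    using continuous_attains_sup[of "{0..1::real}" "\<lambda>t. \<bar>h t\<bar>"] by auto
  have "supnorm h \<le> \<bar>h t\<bar>" using t(2) by (intro supnorm_le) auto
  with abs_le_supnorm[OF assms t(1)] t(1) that show ?thesis by force
qed

lemma supnorm_nonneg: "continuous_on {0..1} h \<Longrightarrow> 0 \<le> supnorm h"
  using abs_le_supnorm[of h 0] by force

lemma supnorm_cong: "(\<And>t. t \<in> {0..1::real} \<Longrightarrow> h t = k t) \<Longrightarrow> supnorm h = supnorm k"
  unfolding supnorm_def by (intro SUP_cong) auto

lemma supnorm_const [simp]: "supnorm (\<lambda>t. c) = \<bar>c\<bar>"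
  unfolding supnorm_def by simp

lemma supnorm_cmult:
  assumes "continuous_on {0..1} h"
  shows "supnorm (\<lambda>t. c * h t) = \<bar>c\<bar> * supnorm h"
proof (rule antisym)
  show "supnorm (\<lambda>t. c * h t) \<le> \<bar>c\<bar> * supnorm h"
    by (rule supnorm_le) (auto simp: abs_mult intro!: mult_left_mono abs_le_supnorm[OF assms])
  obtain t where t: "t \<in> {0..1}" "\<bar>h t\<bar> = supnorm h" using supnorm_attained[OF assms] .
  have "continuous_on {0..1} (\<lambda>t. c * h t)" using assms by (intro continuous_intros)
  from abs_le_supnorm[OF this t(1)] t(2)
  show "\<bar>c\<bar> * supnorm h \<le> supnorm (\<lambda>t. c * h t)" by (simp add: abs_mult)
qed

lemma C01_continuous_on: "h \<in> C01 \<Longrightarrow> continuous_on {0..1} h"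
  unfolding C01_def by auto

lemma C01_eq_0: "h \<in> C01 \<Longrightarrow> t \<notin> {0..1} \<Longrightarrow> h t = 0"
  unfolding C01_def by auto

lemma C01_lincomb: "h \<in> C01 \<Longrightarrow> k \<in> C01 \<Longrightarrow> (\<lambda>t. a * h t + b * k t) \<in> C01"
  unfolding C01_def by (auto intro!: continuous_intros)

lemma C01_diff: "h \<in> C01 \<Longrightarrow> k \<in> C01 \<Longrightarrow> h - k \<in> C01"
  unfolding C01_def fun_diff_def by (auto intro!: continuous_intros)

lemma continuous_on_C01_diff: "h \<in> C01 \<Longrightarrow> k \<in> C01 \<Longrightarrow> continuous_on {0..1} (h - k)"
  by (intro C01_continuous_on C01_diff)

section \<open>Polynomials as elements of \<open>C[0,1]\<close>\<close>

definition poly01 :: "real poly \<Rightarrow> real \<Rightarrow> real" where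
  "poly01 Q t = (if t \<in> {0..1} then poly Q t else 0)"

lemma poly01_C01: "poly01 Q \<in> C01"
proof -
  have "continuous_on {0..1} (poly01 Q)"
    using continuous_on_poly[OF continuous_on_id, of "{0..1}" Q]
    by (rule continuous_on_cong[THEN iffD1, rotated 2]) (auto simp: poly01_def)
  then show ?thesis unfolding C01_def by (auto simp: poly01_def)
qed

lemma mem_polys_iff: "g \<in> polys n \<longleftrightarrow> (\<exists>Q. degree Q \<le> n \<and> g = poly01 Q)"
proof
  assume "g \<in> polys n"
  then obtain Q where "g \<in> C01" "degree Q \<le> n" "\<forall>t\<in>{0..1}. g t = poly Q t"
    unfolding polys_def by auto
  then show "\<exists>Q. degree Q \<le> n \<and> g = poly01 Q"
    by (intro exI[of _ Q]) (auto simp: fun_eq_iff poly01_def C01_eq_0)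
qed (auto simp: polys_def poly01_C01 poly01_def)

lemma polys_imp_C01: "p \<in> polys n \<Longrightarrow> p \<in> C01"
  unfolding polys_def by auto

lemma polys_lincomb:
  assumes "p \<in> polys n" "q \<in> polys n"
  shows "(\<lambda>t. a * p t + b * q t) \<in> polys n"
proof -
  obtain P Q where PQ: "degree P \<le> n" "p = poly01 P" "degree Q \<le> n" "q = poly01 Q"
    using assms by (auto simp: mem_polys_iff)
  have "(\<lambda>t. a * p t + b * q t) = poly01 (smult a P + smult b Q)"
    using PQ by (auto simp: poly01_def)
  moreover have "degree (smult a P + smult b Q) \<le> n"
    using PQ degree_add_le degree_smult_le order_trans by metis
  ultimately show ?thesis by (auto simp: mem_polys_iff)
qed

section \<open>Lagrange interpolation\<close>

definition lagrange_basis :: "real set \<Rightarrow> real \<Rightarrow> real poly" where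
  "lagrange_basis X x = smult (1 / (\<Prod>y\<in>X - {x}. x - y)) (\<Prod>y\<in>X - {x}. [:-y, 1:])"

definition lagrange_interp :: "real set \<Rightarrow> (real \<Rightarrow> real) \<Rightarrow> real poly" where
  "lagrange_interp X v = (\<Sum>x\<in>X. smult (v x) (lagrange_basis X x))"

lemma poly_lagrange_basis:
  "finite X \<Longrightarrow> z \<in> X \<Longrightarrow> poly (lagrange_basis X x) z = (if z = x then 1 else 0)"
  unfolding lagrange_basis_def by (auto simp: poly_prod prod_zero_iff)

lemma degree_lagrange_basis:
  assumes "finite X" "x \<in> X"
  shows "degree (lagrange_basis X x) \<le> card X - 1"
proof -
  have "degree (\<Prod>y\<in>X - {x}. [:-y, 1:]) \<le> (\<Sum>y\<in>X - {x}. degree [:-y, 1::real:])"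
    using degree_prod_sum_le[of "X - {x}" "\<lambda>y. [:-y, 1::real:]"] assms by (simp add: o_def)
  also have "\<dots> = card X - 1" using assms by simp
  finally show ?thesis unfolding lagrange_basis_def by (meson degree_smult_le order_trans)
qed

lemma poly_lagrange_interp:
  assumes "finite X" "z \<in> X"
  shows "poly (lagrange_interp X v) z = v z"
proof -
  have "poly (lagrange_interp X v) z = (\<Sum>x\<in>X. v x * poly (lagrange_basis X x) z)"
    by (simp add: lagrange_interp_def poly_sum)
  also have "\<dots> = (\<Sum>x\<in>X. if z = x then v x else 0)"
    using assms by (intro sum.cong) (auto simp: poly_lagrange_basis)
  also have "\<dots> = v z" using assms by simp
  finally show ?thesis .
qed

lemma degree_lagrange_interp:
  assumes "finite X"
  shows "degree (lagrange_interp X v) \<le> card X - 1"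
  unfolding lagrange_interp_def
  by (rule degree_sum_le)
     (use assms degree_lagrange_basis in \<open>auto intro: order_trans[OF degree_smult_le]\<close>)

lemma lagrange_interp_poly:
  assumes "finite X" "degree Q < card X"
  shows "lagrange_interp X (poly Q) = Q"
proof (rule poly_eqI_degree)
  show "poly (lagrange_interp X (poly Q)) x = poly Q x" if "x \<in> X" for x
    using assms(1) that by (rule poly_lagrange_interp)
  show "degree (lagrange_interp X (poly Q)) < card X"
    using degree_lagrange_interp[OF assms(1), of "poly Q"] assms(2) by linarith
qed (fact assms(2))

lemma lagrange_interp_cong:
  "(\<And>x. x \<in> X \<Longrightarrow> v x = w x) \<Longrightarrow> lagrange_interp X v = lagrange_interp X w"
  unfolding lagrange_interp_def by (intro sum.cong) auto

lemma lagrange_interp_lipschitz: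
  assumes "finite X"
  obtains B where "\<And>v w t. t \<in> {0..1} \<Longrightarrow>
    \<bar>poly (lagrange_interp X v) t - poly (lagrange_interp X w) t\<bar> \<le> B * (\<Sum>x\<in>X. \<bar>v x - w x\<bar>)"
proof -
  define b where "b x = supnorm (poly01 (lagrange_basis X x))" for x
  have b: "\<bar>poly (lagrange_basis X x) t\<bar> \<le> b x" if "t \<in> {0..1}" for x t
    using abs_le_supnorm[OF C01_continuous_on[OF poly01_C01] that] that
    by (simp add: b_def poly01_def)
  have b_nonneg: "b x \<ge> 0" for x
    unfolding b_def by (intro supnorm_nonneg C01_continuous_on poly01_C01)
  have "\<bar>poly (lagrange_interp X v) t - poly (lagrange_interp X w) t\<bar>
      \<le> (\<Sum>y\<in>X. b y) * (\<Sum>x\<in>X. \<bar>v x - w x\<bar>)" if t: "t \<in> {0..1}" for v w t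
  proof -
    have "\<bar>poly (lagrange_interp X v) t - poly (lagrange_interp X w) t\<bar>
        = \<bar>\<Sum>x\<in>X. (v x - w x) * poly (lagrange_basis X x) t\<bar>"
      by (simp add: lagrange_interp_def poly_sum sum_subtractf[symmetric] algebra_simps)
    also have "\<dots> \<le> (\<Sum>x\<in>X. \<bar>v x - w x\<bar> * b x)"
      by (rule order_trans[OF sum_abs]) (auto simp: abs_mult intro!: sum_mono mult_left_mono b t)
    also have "\<dots> \<le> (\<Sum>x\<in>X. \<bar>v x - w x\<bar> * (\<Sum>y\<in>X. b y))"
      using assms b_nonneg by (intro sum_mono mult_left_mono member_le_sum) auto
    finally show ?thesis by (metis sum_distrib_right mult.commute)
  qed
  then show ?thesis using that by blast
qed

section \<open>Best uniform approximation\<close>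

definition best_approx :: "nat \<Rightarrow> (real \<Rightarrow> real) \<Rightarrow> (real \<Rightarrow> real) \<Rightarrow> bool" where
  "best_approx n g p \<longleftrightarrow> p \<in> polys n \<and> (\<forall>q\<in>polys n. supnorm (g - p) \<le> supnorm (g - q))"

lemma continuous_on_supnorm_diff_lagrange_interp:
  assumes "g \<in> C01" "finite X"
  shows "continuous_on UNIV (\<lambda>v. supnorm (g - poly01 (lagrange_interp X v)))"
    (is "continuous_on UNIV ?F")
  unfolding continuous_on_def
proof
  fix w :: "real \<Rightarrow> real"
  obtain B where B: "\<And>v w t. t \<in> {0..1} \<Longrightarrow>
      \<bar>poly (lagrange_interp X v) t - poly (lagrange_interp X w) t\<bar> \<le> B * (\<Sum>x\<in>X. \<bar>v x - w x\<bar>)"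
    using lagrange_interp_lipschitz[OF assms(2)] by blast
  have F_le: "?F v \<le> ?F w + B * (\<Sum>x\<in>X. \<bar>v x - w x\<bar>)" for v w
  proof (rule supnorm_le)
    fix t :: real assume t: "t \<in> {0..1}"
    have "\<bar>(g - poly01 (lagrange_interp X w)) t\<bar> \<le> ?F w"
      using assms(1) poly01_C01 t by (intro abs_le_supnorm continuous_on_C01_diff)
    with B[OF t, of v w] t
    show "\<bar>(g - poly01 (lagrange_interp X v)) t\<bar> \<le> ?F w + B * (\<Sum>x\<in>X. \<bar>v x - w x\<bar>)"
      by (simp add: poly01_def)
  qed
  have "continuous_on UNIV (\<lambda>v::real \<Rightarrow> real. B * (\<Sum>x\<in>X. \<bar>v x - w x\<bar>))"
    by (intro continuous_intros continuous_on_product_coordinates)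
  then have "((\<lambda>v. B * (\<Sum>x\<in>X. \<bar>v x - w x\<bar>)) \<longlongrightarrow> B * (\<Sum>x\<in>X. \<bar>w x - w x\<bar>)) (at w)"
    unfolding continuous_on_def by blast
  then have lim: "((\<lambda>v. B * (\<Sum>x\<in>X. \<bar>v x - w x\<bar>)) \<longlongrightarrow> 0) (at w)" by simp
  have bound: "\<forall>v. norm (?F v - ?F w) \<le> B * (\<Sum>x\<in>X. \<bar>v x - w x\<bar>)"
  proof
    fix v
    have sym: "(\<Sum>x\<in>X. \<bar>w x - v x\<bar>) = (\<Sum>x\<in>X. \<bar>v x - w x\<bar>)"
      by (intro sum.cong refl abs_minus_commute)
    from F_le[of v w] F_le[of w v, unfolded sym] show "norm (?F v - ?F w) \<le> B * (\<Sum>x\<in>X. \<bar>v x - w x\<bar>)"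
      unfolding real_norm_def abs_le_iff by (intro conjI) linarith+
  qed
  have "((\<lambda>v. ?F v - ?F w) \<longlongrightarrow> 0) (at w)"
    using Lim_null_comparison[OF always_eventually[OF bound] lim] .
  then show "(?F \<longlongrightarrow> ?F w) (at w within UNIV)" by (simp add: LIM_zero_iff)
qed

lemma abs_le_twice_supnorm:
  assumes "continuous_on {0..1} g" "continuous_on {0..1} (g - q)" "supnorm (g - q) \<le> supnorm g"
    and "t \<in> {0..1}"
  shows "\<bar>q t\<bar> \<le> 2 * supnorm g"
  using abs_le_supnorm[OF assms(1,4)] abs_le_supnorm[OF assms(2,4)] assms(3) by simp

lemma best_approx_exists:
  assumes g: "g \<in> C01"
  obtains p where "best_approx n g p"
proof -
  obtain X :: "real set" where X: "finite X" "card X = Suc n" "X \<subseteq> {0..1}"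
    using infinite_arbitrarily_large[OF infinite_Icc[OF zero_less_one]] by blast
  define F where "F v = supnorm (g - poly01 (lagrange_interp X v))" for v
  have gc: "continuous_on {0..1} g" using g by (rule C01_continuous_on)
  \<comment> \<open>competitors at least as good as \<open>0\<close> have their node values in this box\<close>
  define S where "S = PiE UNIV (\<lambda>x. if x \<in> X then cball 0 (2 * supnorm g) else {0::real})"
  have "compactin (product_topology (\<lambda>_. euclidean) UNIV) S"
    unfolding S_def by (subst compactin_PiE) auto
  then have "compact S" by (simp add: euclidean_product_topology)
  have zero_S: "(\<lambda>_. 0) \<in> S" unfolding S_def using supnorm_nonneg[OF gc] by auto
  have "continuous_on S F"
    using continuous_on_supnorm_diff_lagrange_interp[OF g X(1)] unfolding F_def
    by (rule continuous_on_subset) simp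
  from continuous_attains_inf[OF \<open>compact S\<close> _ this] zero_S
  obtain v0 where v0: "\<And>v. v \<in> S \<Longrightarrow> F v0 \<le> F v" by blast
  have "best_approx n g (poly01 (lagrange_interp X v0))"
    unfolding best_approx_def
  proof (intro conjI ballI)
    show "poly01 (lagrange_interp X v0) \<in> polys n"
      using degree_lagrange_interp[OF X(1)] X(2) by (auto simp: mem_polys_iff)
    fix q assume "q \<in> polys n"
    then obtain Q where Q: "degree Q \<le> n" "q = poly01 Q" by (auto simp: mem_polys_iff)
    show "supnorm (g - poly01 (lagrange_interp X v0)) \<le> supnorm (g - q)"
    proof (cases "supnorm (g - q) \<le> supnorm g")
      case True
      define v where "v x = (if x \<in> X then poly Q x else 0)" for x
      have bound: "\<bar>poly Q x\<bar> \<le> 2 * supnorm g" if "x \<in> X" for x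
      proof -
        have x: "x \<in> {0..1}" using that X(3) by blast
        have "continuous_on {0..1} (g - q)" using continuous_on_C01_diff[OF g poly01_C01] Q(2) by simp
        from abs_le_twice_supnorm[OF gc this True x] show ?thesis using Q(2) x by (simp add: poly01_def)
      qed
      have "v \<in> S" unfolding S_def using bound by (intro PiE_I) (auto simp: v_def)
      moreover have "lagrange_interp X v = Q"
        using lagrange_interp_cong[of X v "poly Q"] lagrange_interp_poly[OF X(1), of Q] Q(1) X(2)
        by (simp add: v_def)
      ultimately show ?thesis using v0[of v] Q(2) unfolding F_def by simp
    next
      case False
      have "F (\<lambda>_. 0) = supnorm g"
        unfolding F_def lagrange_interp_def by (rule supnorm_cong) (simp add: poly01_def)
      with False v0[OF zero_S] show ?thesis by (simp add: F_def)
    qed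
  qed
  then show ?thesis by (rule that)
qed

lemma compact_obtain_margin:
  fixes h :: "'a::topological_space \<Rightarrow> real"
  assumes "compact K" "continuous_on K h" "\<And>t. t \<in> K \<Longrightarrow> h t < E"
  obtains E' where "E' < E" "\<And>t. t \<in> K \<Longrightarrow> h t \<le> E'"
proof (cases "K = {}")
  case True
  then show ?thesis using that[of "E - 1"] by simp
next
  case False
  then obtain t1 where "t1 \<in> K" "\<forall>t\<in>K. h t \<le> h t1"
    using continuous_attains_sup[OF assms(1) _ assms(2)] by blast
  then show ?thesis using that[of "h t1"] assms(3) by blast
qed

text \<open>The easy half of Kolmogorov's criterion for best uniform approximation.\<close>
lemma supnorm_decreases_along:
  fixes r u :: "real \<Rightarrow> real"
  assumes r: "continuous_on {0..1} r" and u: "continuous_on {0..1} u"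
    and E: "supnorm r > 0" and c: "c > 0"
    and sign: "\<And>t. t \<in> {0..1} \<Longrightarrow> \<bar>r t\<bar> = supnorm r \<Longrightarrow> c \<le> r t * u t"
  obtains l where "l > 0" "supnorm (\<lambda>t. r t - l * u t) < supnorm r"
proof -
  define E where "E = supnorm r"
  have r_le: "\<bar>r t\<bar> \<le> E" if "t \<in> {0..1}" for t using abs_le_supnorm[OF r that] E_def by simp
  define H where "H = supnorm u + 1"
  have H: "H > 0" "\<And>t. t \<in> {0..1} \<Longrightarrow> \<bar>u t\<bar> \<le> H"
    using supnorm_nonneg[OF u] abs_le_supnorm[OF u] by (auto simp: H_def intro: add_increasing2)
  define K where "K = {0..1} \<inter> (\<lambda>t. r t * u t) -` {..c/2}"
  have "closed K" unfolding K_def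
    by (rule continuous_closed_preimage) (use r u in \<open>auto intro!: continuous_intros\<close>)
  moreover have "bounded K"
    unfolding K_def by (rule bounded_Int) (simp add: compact_imp_bounded)
  ultimately have "compact K" by (simp add: compact_eq_bounded_closed)
  have r_less_on_K: "\<bar>r t\<bar> < E" if "t \<in> K" for t
    using that r_le sign[of t] c by (force simp: K_def E_def)
  have "continuous_on K (\<lambda>t. \<bar>r t\<bar>)"
    using r by (rule continuous_on_subset[OF continuous_on_rabs]) (auto simp: K_def)
  then obtain E' where E': "E' < E" "\<And>t. t \<in> K \<Longrightarrow> \<bar>r t\<bar> \<le> E'"
    using compact_obtain_margin[OF \<open>compact K\<close>] r_less_on_K by blast
  define l where "l = min (E - E') E / (2 * H)"
  have l: "l > 0" "l * H < E - E'" "l * H < E"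
    using H(1) E' E E_def by (auto simp: l_def field_simps min_def)
  have less: "\<bar>r t - l * u t\<bar> < E" if t: "t \<in> {0..1}" for t
  proof -
    have lu: "\<bar>l * u t\<bar> \<le> l * H" using H(2)[OF t] l(1) by (simp add: abs_mult)
    show ?thesis
    proof (cases "t \<in> K")
      case True
      then show ?thesis using E'(2)[OF True] lu l(2) by linarith
    next
      case False
      \<comment> \<open>off \<open>K\<close>, \<open>r t\<close> and \<open>l * u t\<close> have the same strict sign\<close>
      then have "r t * u t > 0" using t c unfolding K_def by auto
      then have "0 < l * u t \<and> 0 < r t \<or> l * u t < 0 \<and> r t < 0"
        using l(1) by (auto simp: zero_less_mult_iff mult_less_0_iff)
      then show ?thesis using r_le[OF t] lu l(3) by linarith
    qed
  qed
  have "continuous_on {0..1} (\<lambda>t. r t - l * u t)" using r u by (intro continuous_intros)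
  then obtain t where "t \<in> {0..1}" "\<bar>r t - l * u t\<bar> = supnorm (\<lambda>t. r t - l * u t)"
    by (rule supnorm_attained)
  then show ?thesis using that[OF l(1)] less E_def by fastforce
qed

lemma best_approx_extremal_points:
  assumes g: "g \<in> C01" and best: "best_approx n g p" and E: "supnorm (g - p) > 0"
  obtains A where "A \<subseteq> {t \<in> {0..1}. \<bar>g t - p t\<bar> = supnorm (g - p)}" "finite A" "card A = Suc n"
proof -
  define X where "X = {t \<in> {0..1}. \<bar>g t - p t\<bar> = supnorm (g - p)}"
  have p: "p \<in> polys n" using best by (simp add: best_approx_def)
  define r where "r = g - p"
  have r: "continuous_on {0..1} r"
    unfolding r_def using g polys_imp_C01[OF p] by (rule continuous_on_C01_diff)
  have Er: "supnorm r > 0" using E by (simp add: r_def)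
  have "\<not> (finite X \<and> card X \<le> n)"
  proof
    assume X: "finite X \<and> card X \<le> n"
    \<comment> \<open>interpolating the error on the few extremal points gives a direction of descent\<close>
    define h where "h = lagrange_interp X r"
    have "degree h \<le> n" using degree_lagrange_interp[of X r] X unfolding h_def by linarith
    have sign: "(supnorm r)\<^sup>2 \<le> r t * poly h t" if "t \<in> {0..1}" "\<bar>r t\<bar> = supnorm r" for t
    proof -
      have "t \<in> X" using that by (simp add: X_def r_def)
      then have "poly h t = r t" using X by (simp add: h_def poly_lagrange_interp)
      then show ?thesis using that(2)[symmetric] by (simp add: power2_eq_square)
    qed
    have "(supnorm r)\<^sup>2 > 0" using Er by simp
    then obtain l where "l > 0" "supnorm (\<lambda>t. r t - l * poly h t) < supnorm r"
      using supnorm_decreases_along[OF r continuous_on_poly[OF continuous_on_id] Er _ sign] by blast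
    moreover have "supnorm (g - (\<lambda>t. 1 * p t + l * poly01 h t)) = supnorm (\<lambda>t. r t - l * poly h t)"
      by (rule supnorm_cong) (simp add: r_def poly01_def)
    moreover have "(\<lambda>t. 1 * p t + l * poly01 h t) \<in> polys n"
      using polys_lincomb[OF p, of "poly01 h" 1 l] \<open>degree h \<le> n\<close> mem_polys_iff by blast
    then have "supnorm r \<le> supnorm (g - (\<lambda>t. 1 * p t + l * poly01 h t))"
      using best unfolding best_approx_def r_def by blast
    ultimately show False by linarith
  qed
  then obtain A where "A \<subseteq> X" "card A = Suc n" "finite A"
  proof (cases "finite X")
    case True
    with \<open>\<not> (finite X \<and> card X \<le> n)\<close> have "Suc n \<le> card X" by simp
    then show ?thesis by (rule obtain_subset_with_card_n[OF _ that])
  next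
    case False
    then show ?thesis using infinite_arbitrarily_large[OF False, of "Suc n"] that by blast
  qed
  then show ?thesis using that X_def by blast
qed

lemma best_approx_unique:
  assumes g: "g \<in> C01" and best1: "best_approx n g p1" and best2: "best_approx n g p2"
  shows "p1 = p2"
proof -
  have p1: "p1 \<in> polys n" and p2: "p2 \<in> polys n" using best1 best2 by (auto simp: best_approx_def)
  define E where "E = supnorm (g - p1)"
  have E2: "E = supnorm (g - p2)"
    using best1 best2 p1 p2 unfolding best_approx_def E_def by (auto intro: antisym)
  have le1: "\<bar>g t - p1 t\<bar> \<le> E" if "t \<in> {0..1}" for t
    using abs_le_supnorm[OF continuous_on_C01_diff[OF g polys_imp_C01[OF p1]] that] E_def by simp
  have le2: "\<bar>g t - p2 t\<bar> \<le> E" if "t \<in> {0..1}" for t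
    using abs_le_supnorm[OF continuous_on_C01_diff[OF g polys_imp_C01[OF p2]] that] E2 by simp
  obtain P1 P2 where P: "degree P1 \<le> n" "p1 = poly01 P1" "degree P2 \<le> n" "p2 = poly01 P2"
    using p1 p2 by (auto simp: mem_polys_iff)
  show ?thesis
  proof (cases "E = 0")
    case True
    then have "p1 t = p2 t" for t
      using le1[of t] le2[of t] P by (cases "t \<in> {0..1}") (auto simp: poly01_def)
    then show ?thesis by blast
  next
    case False
    then have "E > 0"
      using supnorm_nonneg[OF continuous_on_C01_diff[OF g polys_imp_C01[OF p1]]] E_def by simp
    \<comment> \<open>the midpoint is again a best approximation; where it is extremal, \<open>p1\<close> and \<open>p2\<close> must agree\<close>
    define pm where "pm t = 1/2 * p1 t + 1/2 * p2 t" for t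
    have pm: "pm \<in> polys n" unfolding pm_def by (rule polys_lincomb[OF p1 p2])
    have "supnorm (g - pm) \<le> E"
    proof (rule supnorm_le)
      fix t :: real assume t: "t \<in> {0..1}"
      from le1[OF t] le2[OF t] show "\<bar>(g - pm) t\<bar> \<le> E" by (simp add: pm_def abs_le_iff)
    qed
    moreover have "E \<le> supnorm (g - pm)" using best1 pm unfolding best_approx_def E_def by auto
    ultimately have Em: "supnorm (g - pm) = E" by simp
    have best_m: "best_approx n g pm" using best1 pm Em unfolding best_approx_def E_def by auto
    obtain A where A: "A \<subseteq> {t \<in> {0..1}. \<bar>g t - pm t\<bar> = E}" "finite A" "card A = Suc n"
      using best_approx_extremal_points[OF g best_m] Em \<open>E > 0\<close> by metis
    have "P1 = P2"
    proof (rule poly_eqI_degree)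
      fix x assume "x \<in> A"
      with A(1) have x: "x \<in> {0..1}" "\<bar>g x - pm x\<bar> = E" by auto
      then have "p1 x = p2 x"
        using le1[OF x(1)] le2[OF x(1)] by (auto simp: pm_def abs_if split: if_splits)
      then show "poly P1 x = poly P2 x" using P x(1) by (simp add: poly01_def)
    qed (use A P in auto)
    then show ?thesis using P by simp
  qed
qed

lemma proj_best_approx:
  assumes "g \<in> C01"
  shows "best_approx n g (proj n g)"
proof -
  obtain p where "best_approx n g p" using best_approx_exists[OF assms] .
  then have "\<exists>!p. best_approx n g p" using best_approx_unique[OF assms] by blast
  then show ?thesis unfolding proj_def best_approx_def[symmetric] by (rule theI')
qed

lemma proj_eqI: "g \<in> C01 \<Longrightarrow> best_approx n g p \<Longrightarrow> proj n g = p"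
  using proj_best_approx best_approx_unique by blast

lemma proj_in_polys: "g \<in> C01 \<Longrightarrow> proj n g \<in> polys n"
  using proj_best_approx by (simp add: best_approx_def)

lemma proj_affine:
  assumes g: "g \<in> C01" and q: "q \<in> polys n" and a: "a \<noteq> 0"
  shows "proj n (\<lambda>t. a * g t + q t) = (\<lambda>t. a * proj n g t + q t)"
proof (rule proj_eqI)
  show "(\<lambda>t. a * g t + q t) \<in> C01" using C01_lincomb[OF g polys_imp_C01[OF q], of a 1] by simp
  define p where "p = proj n g"
  have best: "best_approx n g p" unfolding p_def by (rule proj_best_approx[OF g])
  have p: "p \<in> polys n" using best by (simp add: best_approx_def)
  have scaled: "supnorm ((\<lambda>t. a * g t + q t) - (\<lambda>t. a * w t + q t)) = \<bar>a\<bar> * supnorm (g - w)"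
    if "w \<in> polys n" for w
  proof -
    have "supnorm ((\<lambda>t. a * g t + q t) - (\<lambda>t. a * w t + q t)) = supnorm (\<lambda>t. a * (g - w) t)"
      by (rule supnorm_cong) (simp add: algebra_simps)
    also have "\<dots> = \<bar>a\<bar> * supnorm (g - w)"
      using continuous_on_C01_diff[OF g polys_imp_C01[OF that]] by (rule supnorm_cmult)
    finally show ?thesis .
  qed
  show "best_approx n (\<lambda>t. a * g t + q t) (\<lambda>t. a * proj n g t + q t)"
    unfolding best_approx_def p_def[symmetric]
  proof (intro conjI ballI)
    show "(\<lambda>t. a * p t + q t) \<in> polys n" using polys_lincomb[OF p q, of a 1] by simp
    fix q' assume q': "q' \<in> polys n"
    \<comment> \<open>every competitor has the form \<open>a * w + q\<close> with \<open>w\<close> a polynomial\<close>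
    define w where "w t = 1/a * q' t + (-1/a) * q t" for t
    have w: "w \<in> polys n" unfolding w_def by (rule polys_lincomb[OF q' q])
    have "q' = (\<lambda>t. a * w t + q t)" using a by (auto simp: w_def field_simps)
    then show "supnorm ((\<lambda>t. a * g t + q t) - (\<lambda>t. a * p t + q t))
        \<le> supnorm ((\<lambda>t. a * g t + q t) - q')"
      using best w by (simp add: scaled[OF p] scaled[OF w] best_approx_def mult_left_mono)
  qed
qed

section \<open>The coderivative\<close>

lemma dual01_space:
  assumes "m \<in> dual01"
  shows "space (fst m) = {0..1}" "space (snd m) = {0..1}"
  using assms unfolding dual01_def by (auto dest!: sets_eq_imp_space_eq simp: space_restrict_space)

lemma pairing_cmult: "pairing m (\<lambda>t. c * h t) = c * pairing m h"
  unfolding pairing_def by (simp add: algebra_simps)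

lemma pairing_const:
  assumes "m \<in> dual01"
  shows "pairing m (\<lambda>t. c * poly01 1 t) = c * total m"
proof -
  have "integral\<^sup>L M (poly01 1) = measure M {0..1}" if "space M = {0..1}" for M :: "real measure"
  proof -
    have "integral\<^sup>L M (poly01 1) = integral\<^sup>L M (\<lambda>t. 1)"
      by (rule Bochner_Integration.integral_cong) (use that in \<open>auto simp: poly01_def\<close>)
    then show ?thesis using that by simp
  qed
  then show ?thesis
    unfolding pairing_cmult using dual01_space[OF assms] by (simp add: pairing_def total_def)
qed

lemma zero_sm_in_dual01: "zero_sm \<in> dual01"
  unfolding zero_sm_def dual01_def by (auto intro!: finite_measureI)

lemma total_zero_sm: "total zero_sm = 0"
  unfolding zero_sm_def total_def by simp

definition coderiv_quotient ::
    "nat \<Rightarrow> (real \<Rightarrow> real) \<Rightarrow> smeasure \<Rightarrow> smeasure \<Rightarrow> (real \<Rightarrow> real) \<Rightarrow> real" where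
  "coderiv_quotient n f \<phi> \<mu> g =
     (pairing \<phi> (g - f) - pairing \<mu> (proj n g - proj n f)) /
     (supnorm (g - f) + supnorm (proj n g - proj n f))"

lemma not_in_coderivI:
  assumes "c > 0"
    and approach: "\<And>\<delta>. \<delta> > 0 \<Longrightarrow>
      \<exists>g\<in>C01. g \<noteq> f \<and> supnorm (g - f) < \<delta> \<and> c \<le> coderiv_quotient n f \<phi> \<mu> g"
  shows "\<phi> \<notin> coderiv n f \<mu>"
proof
  assume "\<phi> \<in> coderiv n f \<mu>"
  moreover have "c / 2 > 0" using \<open>c > 0\<close> by simp
  ultimately obtain \<delta> where "\<delta> > 0" and small:
      "\<forall>g\<in>C01. g \<noteq> f \<and> supnorm (g - f) < \<delta> \<longrightarrow> coderiv_quotient n f \<phi> \<mu> g \<le> c / 2"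
    unfolding coderiv_def coderiv_quotient_def by blast
  from approach[OF \<open>\<delta> > 0\<close>] small \<open>c > 0\<close> show False by fastforce
qed

lemma total_ne_imp_not_in_coderiv:
  assumes f: "f \<in> C01" and \<phi>: "\<phi> \<in> dual01" and \<mu>: "\<mu> \<in> dual01" and ne: "total \<phi> \<noteq> total \<mu>"
  shows "\<phi> \<notin> coderiv n f \<mu>"
proof (rule not_in_coderivI)
  define D where "D = total \<phi> - total \<mu>"
  show "\<bar>D\<bar> / 2 > 0" using ne by (simp add: D_def)
  fix \<delta> :: real assume "\<delta> > 0"
  \<comment> \<open>shift \<open>f\<close> by a constant of the sign of \<open>D\<close>; the projection shifts along\<close>
  define s where "s = \<delta> / 2 * sgn D"
  have s: "\<bar>s\<bar> = \<delta> / 2" "s * D = \<delta> / 2 * \<bar>D\<bar>"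
    using \<open>\<delta> > 0\<close> ne by (auto simp: s_def D_def abs_mult sgn_if)
  define g where "g t = 1 * f t + s * poly01 1 t" for t
  have const: "(\<lambda>t. s * poly01 1 t) \<in> polys n"
    unfolding mem_polys_iff by (intro exI[of _ "[:s:]"]) (auto simp: poly01_def)
  have "proj n g = (\<lambda>t. 1 * proj n f t + s * poly01 1 t)"
    unfolding g_def by (rule proj_affine[OF f const one_neq_zero])
  then have diffs: "g - f = (\<lambda>t. s * poly01 1 t)" "proj n g - proj n f = (\<lambda>t. s * poly01 1 t)"
    by (auto simp: g_def)
  have norm: "supnorm (\<lambda>t. s * poly01 1 t) = \<bar>s\<bar>"
    by (subst supnorm_cong[of _ "\<lambda>t. s"]) (auto simp: poly01_def)
  show "\<exists>g\<in>C01. g \<noteq> f \<and> supnorm (g - f) < \<delta> \<and> \<bar>D\<bar> / 2 \<le> coderiv_quotient n f \<phi> \<mu> g"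
  proof (intro bexI conjI)
    show "g \<in> C01" unfolding g_def by (rule C01_lincomb[OF f poly01_C01])
    show "g \<noteq> f"
    proof
      assume "g = f"
      with fun_cong[OF diffs(1), of 0] have "s = 0" by (simp add: poly01_def)
      with s(1) \<open>\<delta> > 0\<close> show False by simp
    qed
    show "supnorm (g - f) < \<delta>" using diffs(1) norm s(1) \<open>\<delta> > 0\<close> by simp
    have "coderiv_quotient n f \<phi> \<mu> g = s * D / (2 * \<bar>s\<bar>)"
      unfolding coderiv_quotient_def diffs norm pairing_const[OF \<phi>] pairing_const[OF \<mu>] D_def
      by (simp add: right_diff_distrib)
    also have "\<dots> = \<bar>D\<bar> / 2" unfolding s using \<open>\<delta> > 0\<close> by simp
    finally show "\<bar>D\<bar> / 2 \<le> coderiv_quotient n f \<phi> \<mu> g" by simp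
  qed
qed

lemma pairing_residual_neg_imp_not_in_coderiv:
  assumes f: "f \<in> C01" and neg: "pairing \<gamma> (f - proj n f) < 0"
  shows "\<gamma> \<notin> coderiv n f \<nu>"
proof (rule not_in_coderivI)
  define p where "p = proj n f"
  have p: "p \<in> polys n" unfolding p_def by (rule proj_in_polys[OF f])
  define d where "d = f - p"
  have d: "continuous_on {0..1} d" unfolding d_def using f polys_imp_C01[OF p] by (rule continuous_on_C01_diff)
  have "supnorm d \<noteq> 0"
  proof
    assume "supnorm d = 0"
    then have "d = (\<lambda>t. 0)"
      using abs_le_supnorm[OF d] C01_eq_0[OF C01_diff[OF f polys_imp_C01[OF p]]]
      by (fastforce simp: d_def fun_eq_iff)
    then show False using neg by (simp add: d_def p_def pairing_def)
  qed
  then have "supnorm d > 0" using supnorm_nonneg[OF d] by simp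
  define c where "c = - pairing \<gamma> d / supnorm d"
  show "c > 0" using neg \<open>supnorm d > 0\<close> by (simp add: c_def d_def p_def divide_neg_pos)
  fix \<delta> :: real assume "\<delta> > 0"
  \<comment> \<open>move \<open>f\<close> a little towards its projection; the projection stays at \<open>p\<close>\<close>
  define s where "s = min (1/2) (\<delta> / (2 * supnorm d))"
  have s: "0 < s" "s < 1" "s * supnorm d < \<delta>"
    using \<open>\<delta> > 0\<close> \<open>supnorm d > 0\<close> by (auto simp: s_def min_def field_simps)
  define g where "g t = (1 - s) * f t + s * p t" for t
  have "(\<lambda>t. s * p t) \<in> polys n" using polys_lincomb[OF p p, of s 0] by simp
  then have "proj n g = (\<lambda>t. (1 - s) * p t + s * p t)"
    unfolding g_def p_def using s(2) by (intro proj_affine[OF f]) simp_all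
  then have diffs: "g - f = (\<lambda>t. (- s) * d t)" "proj n g - proj n f = (\<lambda>t. 0 * d t)"
    by (auto simp: g_def d_def p_def algebra_simps)
  have norm: "supnorm (g - f) = s * supnorm d" using supnorm_cmult[OF d, of "- s"] s(1) by (simp add: diffs)
  show "\<exists>g\<in>C01. g \<noteq> f \<and> supnorm (g - f) < \<delta> \<and> c \<le> coderiv_quotient n f \<gamma> \<nu> g"
  proof (intro bexI conjI)
    show "g \<in> C01" unfolding g_def by (rule C01_lincomb[OF f polys_imp_C01[OF p]])
    show "g \<noteq> f" using norm s(1) \<open>supnorm d > 0\<close> by (auto simp: fun_diff_def)
    show "supnorm (g - f) < \<delta>" using norm s(3) by simp
    have "coderiv_quotient n f \<gamma> \<nu> g = c"
      unfolding coderiv_quotient_def norm unfolding diffs pairing_cmult using s(1) \<open>supnorm d > 0\<close>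
      by (simp add: c_def)
    then show "c \<le> coderiv_quotient n f \<gamma> \<nu> g" by simp
  qed
qed

theorem theorem5p1:
  fixes n :: nat and f :: "real \<Rightarrow> real" and \<mu> \<gamma> :: smeasure
  assumes "n \<ge> 1" and "f \<in> C01" and "\<mu> \<in> dual01" and "\<gamma> \<in> dual01"
  shows "(total \<mu> \<noteq> total \<gamma> \<longrightarrow>
            \<gamma> \<notin> coderiv n f \<mu> \<and> \<mu> \<notin> coderiv n f \<gamma>)
       \<and> (total \<mu> \<noteq> 0 \<longrightarrow>
            zero_sm \<notin> coderiv n f \<mu> \<and> \<mu> \<notin> coderiv n f zero_sm)
       \<and> (pairing \<gamma> (f - proj n f) < 0 \<longrightarrow>
            (\<forall>\<nu>\<in>dual01. \<gamma> \<notin> coderiv n f \<nu>))"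
proof (intro conjI impI)
  assume "total \<mu> \<noteq> total \<gamma>"
  then show "\<gamma> \<notin> coderiv n f \<mu>" "\<mu> \<notin> coderiv n f \<gamma>"
    using total_ne_imp_not_in_coderiv[OF \<open>f \<in> C01\<close>] assms(3,4) by metis+
next
  assume "total \<mu> \<noteq> 0"
  then show "zero_sm \<notin> coderiv n f \<mu>" "\<mu> \<notin> coderiv n f zero_sm"
    using total_ne_imp_not_in_coderiv[OF \<open>f \<in> C01\<close>] zero_sm_in_dual01 total_zero_sm assms(3)
    by metis+
next
  assume "pairing \<gamma> (f - proj n f) < 0"
  then show "\<forall>\<nu>\<in>dual01. \<gamma> \<notin> coderiv n f \<nu>"
    using pairing_residual_neg_imp_not_in_coderiv[OF \<open>f \<in> C01\<close>] by blast
qed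

end
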